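(* Assume the refinement setting of the context, with $F(u)=u$, $G(u)=u$, $p\cap\overline{q}\subseteq F(p\cup q)$, $p\cap\overline{q}\subseteq\mathrm{grd}(G)$, $p\cap\overline{q}\subseteq G(q)$, $$r^{-1}[p\cap\overline{q}]\cap\mathrm{grd}(G')\subseteq F'(\mathrm{grd}(G'))\cap H(\mathrm{grd}(G')),$$ and, in the concrete system $S'$, $$\big(r^{-1}[p\cap\overline{q}]\cap\overline{\mathrm{grd}(G')}\big)\leadsto\mathrm{grd}(G').$$ Then $r^{-1}[p]\leadsto r^{-1}[q]$ holds in $S'$.
   Context: Refinement setting: $u$ (abstract states) and $v$ (concrete states) are sets; $F,G$ are conjunctive set transformers on $u$ (conjunctive = preserves intersections of nonempty families of subsets, hence monotone). $\mathrm{grd}(E)=\overline{E(\varnothing)}$. The concrete system $S'$ has a finite family of conjunctive set transformers (events) on $v$, partitioned into three subfamilies whose choices (pointwise intersections) are $F'$, $G'$, $H$, the subfamily for $G'$ being nonempty; $S'(s)=F'(s)\cap G'(s)\cap H(s)$. $r\subseteq v\times u$ is a total relation (every $y\in v$ is related to some $x\in u$). For $a\subseteq v$, $r[a]=\{x\in u\mid\exists y\in a,(y,x)\in r\}$; for $b\subseteq u$, $r^{-1}[b]=\{y\in v\mid\exists x\in b,(y,x)\in r\}$. Complements $\overline{\cdot}$ are taken in $u$ for subsets of $u$ and in $v$ for subsets of $v$. Refinement conditions: for all $s\subseteq v$, $F(\overline{r[\overline{s}]})\subseteq\overline{r[\overline{F'(s)}]}$, $G(\overline{r[\overline{s}]})\subseteq\overline{r[\overline{G'(s)}]}$,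 $\overline{r[\overline{s}]}\subseteq\overline{r[\overline{H(s)}]}$. $p,q\subseteq u$. Ensures in $S'$: for $a,b\subseteq v$ and a helpful event $E$ (choice of a nonempty subfamily of the events of $S'$), $E\cdot a\gg_w b$ means $a\cap\overline{b}\subseteq S'(a\cup b)$ and $a\cap\overline{b}\subseteq\mathrm{grd}(E)\cap E(b)$. Leads-to $\leadsto$ in $S'$ is the smallest relation on $\mathbb{P}(v)$ such that: (BRL) if $E\cdot a\gg_w b$ for some helpful $E$ then $a\leadsto b$; (TRA) $a\leadsto c$ and $c\leadsto b$ imply $a\leadsto b$; (DSJ) if $a_m\leadsto b$ for all $m$ in an index set $M$ then $\bigcup_{m\in M}a_m\leadsto b$. *)

theory Defs
  imports Main
begin

(* Set transformers on the universe of a type ('a set = P(u) with u = UNIV). *)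

definition conjunctive :: "('a set \<Rightarrow> 'a set) \<Rightarrow> bool" where
  "conjunctive f \<longleftrightarrow> (\<forall>S. S \<noteq> {} \<longrightarrow> f (\<Inter>S) = \<Inter>(f ` S))"

definition grd :: "('a set \<Rightarrow> 'a set) \<Rightarrow> 'a set" where
  "grd E = - E {}"

definition choice :: "('i \<Rightarrow> ('a set \<Rightarrow> 'a set)) \<Rightarrow> 'i set \<Rightarrow> 'a set \<Rightarrow> 'a set" where
  "choice ev J = (\<lambda>s. \<Inter>i\<in>J. ev i s)"

(* E . a >>_w b in the system with events ev i, i \<in> I, helpful event = choice over J *)
definition ensures_w :: "('i \<Rightarrow> ('a set \<Rightarrow> 'a set)) \<Rightarrow> 'i set \<Rightarrow> 'i set \<Rightarrow> 'a set \<Rightarrow> 'a set \<Rightarrow> bool" where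
  "ensures_w ev I J a b \<longleftrightarrow>
     a \<inter> - b \<subseteq> choice ev I (a \<union> b) \<and>
     a \<inter> - b \<subseteq> grd (choice ev J) \<inter> choice ev J b"

inductive leadsto :: "('i \<Rightarrow> ('a set \<Rightarrow> 'a set)) \<Rightarrow> 'i set \<Rightarrow> 'a set \<Rightarrow> 'a set \<Rightarrow> bool"
  for ev :: "'i \<Rightarrow> ('a set \<Rightarrow> 'a set)" and I :: "'i set" where
  BRL: "\<lbrakk>J \<subseteq> I; J \<noteq> {}; ensures_w ev I J a b\<rbrakk> \<Longrightarrow> leadsto ev I a b"
| TRA: "\<lbrakk>leadsto ev I a c; leadsto ev I c b\<rbrakk> \<Longrightarrow> leadsto ev I a b"
| DSJ: "(\<And>a. a \<in> A \<Longrightarrow> leadsto ev I a b) \<Longrightarrow> leadsto ev I (\<Union>A) b"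

end

theory Submission
  imports Defs
begin

(* Put D = r^-1[p - q] and B = r^-1[q], so that r^-1[p] is contained in D \<union> B.
   The refinement conditions carry p - q \<subseteq> F(p \<union> q) and p - q \<subseteq> G(q) down to
   D \<subseteq> F'(D \<union> B), D \<subseteq> G'(B) and D \<subseteq> H(D \<union> B); hence D unless B in S'.
   Where G' is enabled, D ensures B with G' as helpful event.  Where it is disabled,
   D leads to grd G' by hypothesis, and PSP with D unless B sharpens this to
   D \<leadsto> (D \<inter> grd G') \<union> B, which leads to B by the first case. *)

definition unless :: "('i \<Rightarrow> ('a set \<Rightarrow> 'a set)) \<Rightarrow> 'i set \<Rightarrow> 'a set \<Rightarrow> 'a set \<Rightarrow> bool" where
  "unless ev I a b \<longleftrightarrow> a \<inter> - b \<subseteq> choice ev I (a \<union> b)"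

lemma conjunctive_Int: "conjunctive f \<Longrightarrow> f (X \<inter> Y) = f X \<inter> f Y"
  unfolding conjunctive_def by (drule spec[of _ "{X, Y}"]) simp

lemma conjunctive_mono: "conjunctive f \<Longrightarrow> mono f"
  by (rule monoI) (metis conjunctive_Int inf.absorb_iff1 le_inf_iff)

lemma conjunctive_choice: "\<forall>i\<in>J. conjunctive (ev i) \<Longrightarrow> conjunctive (choice ev J)"
  unfolding conjunctive_def choice_def by auto

lemma choice_Un: "choice ev (J \<union> K) s = choice ev J s \<inter> choice ev K s"
  unfolding choice_def by auto

lemma choice_antimono: "J \<subseteq> K \<Longrightarrow> choice ev K s \<subseteq> choice ev J s"
  unfolding choice_def by auto

lemma refinement_converse_Image:
  assumes "mono E"
    and refines: "\<forall>s. E (- (r `` (- s))) \<subseteq> - (r `` (- E' s))"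
    and "a \<subseteq> E b"
  shows "r\<inverse> `` a \<subseteq> E' (r\<inverse> `` b)"
proof -
  have "b \<subseteq> - (r `` (- (r\<inverse> `` b)))" by blast
  with assms(1,3) have "a \<subseteq> E (- (r `` (- (r\<inverse> `` b))))"
    by (meson monoD order_trans)
  also have "\<dots> \<subseteq> - (r `` (- E' (r\<inverse> `` b)))" using refines by blast
  finally show ?thesis by blast
qed

lemma ensures_w_iff_unless:
  "ensures_w ev I J a b \<longleftrightarrow>
     unless ev I a b \<and> a \<inter> - b \<subseteq> grd (choice ev J) \<inter> choice ev J b"
  unfolding ensures_w_def unless_def ..

lemma unless_psp:
  assumes "conjunctive (choice ev I)" "unless ev I a b" "unless ev I c d"
  shows "unless ev I (a \<inter> c) ((b \<inter> c) \<union> d)"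
proof -
  have "a \<inter> c \<inter> - ((b \<inter> c) \<union> d) \<subseteq> choice ev I (a \<union> b) \<inter> choice ev I (c \<union> d)"
    using assms(2,3) unfolding unless_def by blast
  also have "\<dots> = choice ev I ((a \<union> b) \<inter> (c \<union> d))"
    using conjunctive_Int[OF assms(1)] by simp
  also have "\<dots> \<subseteq> choice ev I ((a \<inter> c) \<union> ((b \<inter> c) \<union> d))"
    using conjunctive_mono[OF assms(1)] by (rule monoD) blast
  finally show ?thesis unfolding unless_def .
qed

lemma ensures_w_psp:
  assumes conj: "\<forall>i\<in>I. conjunctive (ev i)" and "J \<subseteq> I"
    and ens: "ensures_w ev I J a b" and un: "unless ev I c d"
  shows "ensures_w ev I J (a \<inter> c) ((b \<inter> c) \<union> d)"
proof -
  have conjJ: "conjunctive (choice ev J)"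
    using conj \<open>J \<subseteq> I\<close> by (blast intro: conjunctive_choice)
  have "a \<inter> c \<inter> - ((b \<inter> c) \<union> d) \<subseteq> choice ev J b \<inter> choice ev J (c \<union> d)"
    using ens un choice_antimono[OF \<open>J \<subseteq> I\<close>, of ev "c \<union> d"]
    unfolding ensures_w_iff_unless unless_def by blast
  also have "\<dots> = choice ev J (b \<inter> (c \<union> d))"
    using conjunctive_Int[OF conjJ] by simp
  also have "\<dots> \<subseteq> choice ev J ((b \<inter> c) \<union> d)"
    using conjunctive_mono[OF conjJ] by (rule monoD) blast
  finally show ?thesis
    using ens un unless_psp[OF conjunctive_choice[OF conj]]
    unfolding ensures_w_iff_unless by blast
qed

lemma subset_imp_leadsto: "I \<noteq> {} \<Longrightarrow> a \<subseteq> b \<Longrightarrow> leadsto ev I a b"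
  by (rule BRL[of I]) (auto simp: ensures_w_def)

lemma leadsto_Un: "leadsto ev I a b \<Longrightarrow> leadsto ev I c b \<Longrightarrow> leadsto ev I (a \<union> c) b"
  using DSJ[of "{a, c}" ev I b] by auto

lemma leadsto_cancel:
  assumes "I \<noteq> {}" "leadsto ev I a (c \<union> b)" "leadsto ev I c b"
  shows "leadsto ev I a b"
proof -
  have "leadsto ev I b b" using \<open>I \<noteq> {}\<close> by (rule subset_imp_leadsto) blast
  with assms(3) have "leadsto ev I (c \<union> b) b" by (rule leadsto_Un)
  with assms(2) show ?thesis by (rule TRA)
qed

lemma leadsto_psp:
  assumes "leadsto ev I a b"
    and conj: "\<forall>i\<in>I. conjunctive (ev i)" and "I \<noteq> {}" and un: "unless ev I c d"
  shows "leadsto ev I (a \<inter> c) ((b \<inter> c) \<union> d)"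
  using assms(1)
proof (induction rule: leadsto.induct)
  case (BRL J a b)
  then show ?case by (blast intro: leadsto.BRL ensures_w_psp[OF conj _ _ un])
next
  case (TRA a m b)
  have "leadsto ev I d ((b \<inter> c) \<union> d)" using \<open>I \<noteq> {}\<close> by (rule subset_imp_leadsto) blast
  with TRA.IH(2) have "leadsto ev I ((m \<inter> c) \<union> d) ((b \<inter> c) \<union> d)" by (rule leadsto_Un)
  with TRA.IH(1) show ?case by (rule leadsto.TRA)
next
  case (DSJ A b)
  show ?case
    unfolding Int_Union2 by (rule leadsto.DSJ) (use DSJ.IH in blast)
qed

lemma leadsto_by_helpful_event:
  fixes ev :: "'i \<Rightarrow> ('a set \<Rightarrow> 'a set)" and I J K :: "'i set"
  defines "g \<equiv> grd (choice ev J)"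
  assumes conj: "\<forall>i\<in>I. conjunctive (ev i)"
    and I: "I = J \<union> K" and "J \<noteq> {}"
    and progress: "a \<inter> - b \<subseteq> choice ev K (a \<union> b) \<inter> choice ev J b"
    and enabled: "a \<inter> g \<subseteq> choice ev K g"
    and enabling: "leadsto ev I (a \<inter> - g) g"
  shows "leadsto ev I a b"
proof -
  have "J \<subseteq> I" "I \<noteq> {}" using I \<open>J \<noteq> {}\<close> by auto
  have conjJ: "conjunctive (choice ev J)" and conjK: "conjunctive (choice ev K)"
    using conj I by (auto intro: conjunctive_choice)
  have choice_I: "choice ev I s = choice ev J s \<inter> choice ev K s" for s
    unfolding I by (rule choice_Un)
  have "choice ev J b \<subseteq> choice ev J (a \<union> b)"
    using conjunctive_mono[OF conjJ] by (rule monoD) blast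
  with progress have a_unless_b: "unless ev I a b"
    unfolding unless_def choice_I by blast
  have "a \<inter> g \<inter> - b \<subseteq> choice ev K ((a \<union> b) \<inter> g) \<inter> choice ev J b"
    using progress enabled conjunctive_Int[OF conjK] by blast
  moreover have "choice ev K ((a \<union> b) \<inter> g) \<subseteq> choice ev K ((a \<inter> g) \<union> b)"
    using conjunctive_mono[OF conjK] by (rule monoD) blast
  moreover have "choice ev J b \<subseteq> choice ev J ((a \<inter> g) \<union> b)"
    using conjunctive_mono[OF conjJ] by (rule monoD) blast
  ultimately have "ensures_w ev I J (a \<inter> g) b"
    using progress unfolding ensures_w_iff_unless unless_def choice_I g_def by blast
  then have enabled_leadsto: "leadsto ev I (a \<inter> g) b"
    using \<open>J \<subseteq> I\<close> \<open>J \<noteq> {}\<close> by (blast intro: BRL)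
  from leadsto_psp[OF enabling conj \<open>I \<noteq> {}\<close> a_unless_b]
  have "leadsto ev I (a \<inter> - g) ((a \<inter> g) \<union> b)" by (simp add: Int_ac)
  with \<open>I \<noteq> {}\<close> have "leadsto ev I (a \<inter> - g) b"
    using enabled_leadsto by (rule leadsto_cancel)
  with enabled_leadsto have "leadsto ev I ((a \<inter> g) \<union> (a \<inter> - g)) b"
    by (rule leadsto_Un)
  then show ?thesis by (simp add: Int_Un_distrib[symmetric])
qed

theorem lemma7:
  fixes F G :: "'u set \<Rightarrow> 'u set"
    and ev :: "'i \<Rightarrow> ('v set \<Rightarrow> 'v set)"
    and I IF IG IH :: "'i set"
    and r :: "('v \<times> 'u) set"
    and p q :: "'u set"
  defines "F' \<equiv> choice ev IF"
    and "G' \<equiv> choice ev IG"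
    and "H \<equiv> choice ev IH"
  assumes conjF: "conjunctive F" and conjG: "conjunctive G"
    and finI: "finite I"
    and conj_ev: "\<forall>i\<in>I. conjunctive (ev i)"
    and partition: "I = IF \<union> IG \<union> IH" "IF \<inter> IG = {}" "IF \<inter> IH = {}" "IG \<inter> IH = {}"
    and IG_ne: "IG \<noteq> {}"
    and total: "\<forall>y. \<exists>x. (y, x) \<in> r"
    and refF: "\<forall>s. F (- (r `` (- s))) \<subseteq> - (r `` (- F' s))"
    and refG: "\<forall>s. G (- (r `` (- s))) \<subseteq> - (r `` (- G' s))"
    and refH: "\<forall>s. - (r `` (- s)) \<subseteq> - (r `` (- H s))"
    and F_univ: "F UNIV = UNIV" and G_univ: "G UNIV = UNIV"
    and h1: "p \<inter> - q \<subseteq> F (p \<union> q)"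
    and h2: "p \<inter> - q \<subseteq> grd G"
    and h3: "p \<inter> - q \<subseteq> G q"
    and h4: "(r\<inverse>) `` (p \<inter> - q) \<inter> grd G' \<subseteq> F' (grd G') \<inter> H (grd G')"
    and h5: "leadsto ev I ((r\<inverse>) `` (p \<inter> - q) \<inter> - grd G') (grd G')"
  shows "leadsto ev I ((r\<inverse>) `` p) ((r\<inverse>) `` q)"
proof -
  define D B where "D = r\<inverse> `` (p \<inter> - q)" and "B = r\<inverse> `` q"
  have D_B: "r\<inverse> `` (p \<union> q) = D \<union> B"
    unfolding D_def B_def Image_Un[symmetric] by (rule arg_cong[where f = "Image _"]) blast
  have "D \<subseteq> F' (r\<inverse> `` (p \<union> q))"
    using conjunctive_mono[OF conjF] refF h1 unfolding D_def
    by (rule refinement_converse_Image)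
  moreover have "D \<subseteq> G' B"
    using conjunctive_mono[OF conjG] refG h3 unfolding D_def B_def
    by (rule refinement_converse_Image)
  moreover have "D \<subseteq> H (r\<inverse> `` (p \<union> q))"
    unfolding D_def
    by (rule refinement_converse_Image[where E = "\<lambda>s. s", OF mono_on_ident refH]) blast
  ultimately have progress: "D \<inter> - B \<subseteq> choice ev (IF \<union> IH) (D \<union> B) \<inter> choice ev IG B"
    unfolding choice_Un F'_def G'_def H_def D_B by blast
  have I_split: "I = IG \<union> (IF \<union> IH)" using partition(1) by blast
  have enabled: "D \<inter> grd (choice ev IG) \<subseteq> choice ev (IF \<union> IH) (grd (choice ev IG))"
    using h4 unfolding D_def choice_Un F'_def G'_def H_def by blast
  have enabling: "leadsto ev I (D \<inter> - grd (choice ev IG)) (grd (choice ev IG))"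
    using h5 unfolding D_def G'_def .
  have "I \<noteq> {}" using I_split IG_ne by blast
  then have "leadsto ev I (r\<inverse> `` p) (D \<union> B)"
    unfolding D_B[symmetric] by (rule subset_imp_leadsto) blast
  moreover from conj_ev I_split IG_ne progress enabled enabling have "leadsto ev I D B"
    by (rule leadsto_by_helpful_event)
  ultimately show ?thesis
    unfolding B_def by (rule leadsto_cancel[OF \<open>I \<noteq> {}\<close>])
qed

end
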